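(* In the setting below, suppose that $$g(x)=\gcd(g_{11}(x),g_{22}(x))=\gcd(g_{11}(x),g_{11}^*(x))=\gcd(g_{22}(x),g_{22}^*(x)),$$ that $g(x)$ is self-reciprocal, and that $g_{11}(x)g_{22}(x)$ is self-reciprocal. Then $C$ is symplectic LCD.
   Context: Let $q$ be a prime power, $F=\mathbb{F}_q$, $m\ge1$ with $\gcd(q,m)=1$, and $R=F[x]/\langle x^m-1\rangle$; elements of $R$ are represented by polynomials of degree $<m$ and identified with their coefficient vectors in $F^m$. A quasi-cyclic code of length $2m$ and index $2$ is an $R$-submodule $C\subseteq R^2$. For $a,b\in R$ let $\langle a,b\rangle_e$ be the standard dot product of their coefficient vectors. The symplectic form on $R^2$ is $\langle (a_1,a_2),(b_1,b_2)\rangle_s=\langle a_1,b_2\rangle_e-\langle a_2,b_1\rangle_e$; $C$ is symplectic LCD if $C\cap C^{\perp_s}=\{0\}$. For a nonzero polynomial $f$ of degree $k$, $f^*(x)=x^kf(x^{-1})$; $f$ is self-reciprocal if $f^*=\alpha f$ for some $\alpha\in F$. Gcds are taken monic. Suppose $C$ is generated as an $R$-module by $(g_{11}(x),g_{12}(x))$ and $(0,g_{22}(x))$, where $g_{11},g_{12},g_{22}\in F[x]$ satisfy: $g_{11}\mid x^m-1$, $g_{22}\mid x^m-1$, $\deg g_{12}<\deg g_{22}$, and $g_{11}g_{22}\mid (x^m-1)g_{12}$. *)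

theory Defs
  imports "HOL-Computational_Algebra.Computational_Algebra"
begin

definition xm1 :: "nat \<Rightarrow> 'a::field poly" where
  "xm1 m = monom 1 m - 1"

text \<open>Elements of R = F[x]/(x^m - 1) are represented by polynomials of degree < m;
  reduction of an arbitrary polynomial to its representative.\<close>
definition modR :: "nat \<Rightarrow> 'a::field poly \<Rightarrow> 'a poly" where
  "modR m p = p mod xm1 m"

definition Rspace :: "nat \<Rightarrow> 'a::field poly set" where
  "Rspace m = {p. degree p < m}"

definition ip_e :: "nat \<Rightarrow> 'a::field poly \<Rightarrow> 'a poly \<Rightarrow> 'a" where
  "ip_e m a b = (\<Sum>i<m. coeff a i * coeff b i)"

definition ip_s :: "nat \<Rightarrow> 'a::field poly \<times> 'a poly \<Rightarrow> 'a poly \<times> 'a poly \<Rightarrow> 'a" where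
  "ip_s m u v = ip_e m (fst u) (snd v) - ip_e m (snd u) (fst v)"

definition qc_code :: "nat \<Rightarrow> 'a::field poly \<Rightarrow> 'a poly \<Rightarrow> 'a poly \<Rightarrow> ('a poly \<times> 'a poly) set" where
  "qc_code m g11 g12 g22 =
     {(modR m (a * g11), modR m (a * g12 + b * g22)) | a b. a \<in> Rspace m \<and> b \<in> Rspace m}"

definition sympl_dual :: "nat \<Rightarrow> ('a::field poly \<times> 'a poly) set \<Rightarrow> ('a poly \<times> 'a poly) set" where
  "sympl_dual m C = {v. v \<in> Rspace m \<times> Rspace m \<and> (\<forall>c\<in>C. ip_s m c v = 0)}"

definition symplectic_LCD :: "nat \<Rightarrow> ('a::field poly \<times> 'a poly) set \<Rightarrow> bool" where
  "symplectic_LCD m C \<longleftrightarrow> C \<inter> sympl_dual m C = {(0, 0)}"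

text \<open>f^* = x^(deg f) f(1/x) is reflect_poly f; self-reciprocal: nonzero and f^* = \<alpha> f.\<close>
definition self_reciprocal :: "'a::field poly \<Rightarrow> bool" where
  "self_reciprocal f \<longleftrightarrow> f \<noteq> 0 \<and> (\<exists>\<alpha>. reflect_poly f = smult \<alpha> f)"

end

theory Submission
  imports "HOL-Number_Theory.Residues" Defs
begin

text \<open>Write n = x^m - 1; it is squarefree because m is invertible in F. Orthogonality of
  v = (v1, v2) to the shifts x^k (0, g22) and x^k (g11, g12) says that n divides
  g22 \<cdot> rev v1 and g11 \<cdot> rev v2 - g12 \<cdot> rev v1, where rev reverses the coefficient vector.
  Reflecting, each prime factor p of n divides g22^* or v1, and, once v1 = 0, g11^* or v2.
  If v also lies in C then v1 = a g11 and v2 = a g12 + b g22 modulo n, and the gcd conditions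
  together with the self-reciprocity of g11 g22 rule out p \<nmid> v1 and then p \<nmid> v2.
  As n is squarefree it divides v1 and v2, so v = 0.\<close>

lemma of_nat_neq_0_if_coprime_card:
  assumes "coprime (card (UNIV :: 'a::ring_1 set)) m"
  shows "(of_nat m :: 'a) \<noteq> 0"
proof
  assume "(of_nat m :: 'a) = 0"
  then have "CHAR('a) dvd m" by (simp add: of_nat_eq_0_iff_char_dvd)
  with CHAR_dvd_CARD assms have "CHAR('a) dvd 1" by (metis coprime_common_divisor)
  then show False by (simp add: CHAR_not_1)
qed

lemma squarefree_dvdI:
  fixes n x :: "'a::factorial_semiring"
  assumes n: "squarefree n" and primes: "\<And>p. prime p \<Longrightarrow> p dvd n \<Longrightarrow> p dvd x"
  shows "n dvd x"
proof (cases "x = 0")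
  case False
  have n0: "n \<noteq> 0" using n by auto
  show ?thesis
  proof (rule multiplicity_le_imp_dvd[OF n0])
    fix p :: 'a assume p: "prime p"
    show "multiplicity p n \<le> multiplicity p x"
    proof (cases "p dvd n")
      case True
      then have "1 \<le> multiplicity p x"
        using primes[OF p] False p by (simp add: multiplicity_eq_zero_iff leI)
      moreover have "multiplicity p n \<le> 1"
        using n n0 p squarefree_factorial_semiring'' by blast
      ultimately show ?thesis by linarith
    qed (simp add: not_dvd_imp_multiplicity_0)
  qed
qed simp

lemma coeff_xm1: "coeff (xm1 m :: 'a::field poly) i = (if i = m then 1 else 0) - (if i = 0 then 1 else 0)"
  by (simp add: xm1_def coeff_monom)

lemma degree_xm1: "m \<ge> 1 \<Longrightarrow> degree (xm1 m :: 'a::field poly) = m"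
  by (rule order.antisym, rule degree_le) (auto simp: coeff_xm1 intro: le_degree)

lemma xm1_neq_0: "m \<ge> 1 \<Longrightarrow> xm1 m \<noteq> (0 :: 'a::field poly)"
  using degree_xm1[of m] by (metis degree_0 not_one_le_zero)

lemma degree_mod_xm1_less: "m \<ge> 1 \<Longrightarrow> degree (p mod xm1 m :: 'a::field poly) < m"
  using degree_mod_less[OF xm1_neq_0, of m p] by (cases "p mod xm1 m = 0") (auto simp: degree_xm1)

lemma reflect_poly_xm1: "m \<ge> 1 \<Longrightarrow> reflect_poly (xm1 m :: 'a::field poly) = - xm1 m"
  by (rule poly_eqI) (auto simp: coeff_reflect_poly degree_xm1 coeff_xm1)

text \<open>Separability of x^m - 1: a square factor would divide the derivative m x^(m-1),
  hence x^m = (x^m - 1) + 1, hence 1.\<close>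
lemma squarefree_xm1:
  assumes m: "m \<ge> 1" and "(of_nat m :: 'a::field) \<noteq> 0"
  shows "squarefree (xm1 m :: 'a poly)"
proof (rule squarefreeI)
  fix p :: "'a poly" assume sq: "p ^ 2 dvd xm1 m"
  then obtain q where q: "xm1 m = p * (p * q)" by (metis dvdE mult.assoc power2_eq_square)
  have "pderiv (xm1 m) = p * pderiv (p * q) + (p * q) * pderiv p"
    unfolding q by (rule pderiv_mult)
  moreover have "pderiv (xm1 m :: 'a poly) = smult (of_nat m) (monom 1 (m - 1))"
    by (simp add: xm1_def pderiv_diff pderiv_monom smult_monom)
  ultimately have "p dvd smult (of_nat m) (monom 1 (m - 1))" by (metis dvd_add dvd_mult2 dvd_triv_left)
  with assms have "p dvd monom 1 (m - 1)" by (metis dvd_smult_cancel)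
  then have "p dvd monom 1 (m - 1) * [:0, 1:]" by (rule dvd_mult2)
  also have "monom 1 (m - 1) * [:0, 1:] = xm1 m + (1 :: 'a poly)"
    using m by (simp add: xm1_def flip: monom_Suc)
  finally have "p dvd xm1 m + 1" .
  moreover have "p dvd xm1 m" using q by simp
  ultimately show "p dvd 1" by (metis dvd_add_right_iff)
qed

definition rev_coeffs :: "nat \<Rightarrow> 'a::field poly \<Rightarrow> 'a poly" where
  "rev_coeffs m p = (\<Sum>i<m. monom (coeff p i) (m - 1 - i))"

lemma coeff_rev_coeffs: "coeff (rev_coeffs m p) j = (if j < m then coeff p (m - 1 - j) else 0)"
proof -
  have "coeff (rev_coeffs m p) j = (\<Sum>i<m. if i = m - 1 - j \<and> j < m then coeff p i else 0)"
    unfolding rev_coeffs_def coeff_sum coeff_monom by (rule sum.cong) auto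
  also have "\<dots> = (if j < m then coeff p (m - 1 - j) else 0)"
    by (cases "j < m") (auto simp: sum.delta)
  finally show ?thesis .
qed

lemma degree_rev_coeffs_less: "m \<ge> 1 \<Longrightarrow> degree (rev_coeffs m p) < m"
  using degree_le[of "m - 1" "rev_coeffs m p"] by (force simp: coeff_rev_coeffs)

lemma rev_coeffs_rev_coeffs: "degree p < m \<Longrightarrow> rev_coeffs m (rev_coeffs m p) = p"
  by (rule poly_eqI) (auto simp: coeff_rev_coeffs coeff_eq_0)

lemma rev_coeffs_eq_monom_mult_reflect_poly:
  "degree p < m \<Longrightarrow> rev_coeffs m p = monom 1 (m - 1 - degree p) * reflect_poly p"
  by (rule poly_eqI) (auto simp: coeff_rev_coeffs coeff_monom_mult coeff_reflect_poly coeff_eq_0)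

lemma reflect_poly_rev_coeffs_dvd:
  assumes "m \<ge> 1" and "degree p < m"
  shows "reflect_poly (rev_coeffs m p) dvd p"
proof -
  have "p = rev_coeffs m (rev_coeffs m p)" using assms(2) by (simp add: rev_coeffs_rev_coeffs)
  also have "\<dots> = monom 1 (m - 1 - degree (rev_coeffs m p)) * reflect_poly (rev_coeffs m p)"
    using degree_rev_coeffs_less[OF assms(1)] by (rule rev_coeffs_eq_monom_mult_reflect_poly)
  finally show ?thesis by (metis dvd_triv_right)
qed

lemma ip_e_eq_coeff_mult_rev_coeffs:
  assumes m: "m \<ge> 1"
  shows "ip_e m a b = coeff (a * rev_coeffs m b) (m - 1)"
proof -
  have "coeff (a * rev_coeffs m b) (m - 1) = (\<Sum>i\<le>m - 1. coeff a i * coeff (rev_coeffs m b) (m - 1 - i))"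
    by (rule coeff_mult)
  also have "\<dots> = (\<Sum>i\<le>m - 1. coeff a i * coeff b i)"
    using m by (intro sum.cong) (auto simp: coeff_rev_coeffs)
  also have "{..m - 1} = {..<m}" using m by auto
  finally show ?thesis by (simp add: ip_e_def)
qed

text \<open>Reduction modulo x^m - 1 folds x^(m+i) onto x^i; below degree 2m - 1 nothing lands on x^(m-1).\<close>
lemma coeff_mod_xm1_top:
  fixes f :: "'a::field poly"
  assumes m: "m \<ge> 1" and deg: "degree f < 2 * m - 1"
  shows "coeff (f mod xm1 m) (m - 1) = coeff f (m - 1)"
proof -
  define lo hi where "lo = poly_cutoff m f" and "hi = poly_shift m f"
  have f: "f = (lo + hi) + xm1 m * hi"
    by (rule poly_eqI) (auto simp: lo_def hi_def xm1_def coeff_poly_cutoff coeff_poly_shift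
        algebra_simps coeff_monom_mult)
  have "degree (lo + hi) \<le> m - 1"
    using deg by (intro degree_le)
      (auto simp: lo_def hi_def coeff_poly_cutoff coeff_poly_shift intro!: coeff_eq_0)
  then have "(lo + hi) mod xm1 m = lo + hi"
    using m by (intro mod_poly_less) (simp add: degree_xm1)
  then have "coeff (f mod xm1 m) (m - 1) = coeff lo (m - 1) + coeff hi (m - 1)"
    by (subst f) simp
  also have "coeff hi (m - 1) = 0"
    using deg m by (auto simp: hi_def coeff_poly_shift intro!: coeff_eq_0)
  also have "coeff lo (m - 1) = coeff f (m - 1)" using m by (simp add: lo_def coeff_poly_cutoff)
  finally show ?thesis by simp
qed

lemma ip_e_mod_xm1:
  assumes m: "m \<ge> 1" and "degree b < m"
  shows "ip_e m (p mod xm1 m) b = coeff ((p * rev_coeffs m b) mod xm1 m) (m - 1)"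
proof -
  have "degree ((p mod xm1 m) * rev_coeffs m b) < 2 * m - 1"
    using degree_mult_le[of "p mod xm1 m" "rev_coeffs m b"]
      degree_mod_xm1_less[OF m, of p] degree_rev_coeffs_less[OF m, of b] by linarith
  then have "ip_e m (p mod xm1 m) b = coeff (((p mod xm1 m) * rev_coeffs m b) mod xm1 m) (m - 1)"
    by (simp only: ip_e_eq_coeff_mult_rev_coeffs[OF m] coeff_mod_xm1_top[OF m])
  then show ?thesis by (simp add: mod_mult_left_eq)
qed

text \<open>The coefficient of x^(m-1) in x^k h runs through all coefficients of h mod x^m - 1.\<close>
lemma xm1_dvd_if_shifted_top_coeffs_0:
  fixes h :: "'a::field poly"
  assumes m: "m \<ge> 1" and top: "\<And>k. k < m \<Longrightarrow> coeff ((monom 1 k * h) mod xm1 m) (m - 1) = 0"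
  shows "xm1 m dvd h"
proof -
  define r where "r = h mod xm1 m"
  have dr: "degree r < m" using degree_mod_xm1_less[OF m] by (simp add: r_def)
  have "coeff r j = 0" if j: "j < m" for j
  proof -
    define k where "k = m - 1 - j"
    have k: "k < m" using m by (simp add: k_def)
    have "degree (monom 1 k * r) < 2 * m - 1"
      using degree_mult_le[of "monom 1 k" r] dr k by (simp add: degree_monom_eq)
    have "coeff r j = coeff (monom 1 k * r) (k + j)" by (simp add: coeff_monom_mult)
    also have "k + j = m - 1" using j by (simp add: k_def)
    also have "coeff (monom 1 k * r) (m - 1) = coeff ((monom 1 k * r) mod xm1 m) (m - 1)"
      using \<open>degree (monom 1 k * r) < 2 * m - 1\<close> by (simp only: coeff_mod_xm1_top[OF m])
    also have "\<dots> = 0" using top[OF k] by (simp add: r_def mod_mult_right_eq)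
    finally show ?thesis .
  qed
  moreover have "coeff r j = 0" if "j \<ge> m" for j using dr that by (simp add: coeff_eq_0)
  ultimately have "r = 0" by (metis coeff_0 leI poly_eqI)
  then show ?thesis by (simp add: r_def mod_eq_0_iff_dvd)
qed

lemma sympl_dual_qc_code_dvd:
  fixes g11 g12 g22 :: "'a::field poly"
  assumes m: "m \<ge> 1" and v: "(v1, v2) \<in> sympl_dual m (qc_code m g11 g12 g22)"
  shows "xm1 m dvd g22 * rev_coeffs m v1"
    and "xm1 m dvd g11 * rev_coeffs m v2 - g12 * rev_coeffs m v1"
proof -
  have d1: "degree v1 < m" and d2: "degree v2 < m"
    and orth: "\<And>c. c \<in> qc_code m g11 g12 g22 \<Longrightarrow> ip_s m c (v1, v2) = 0"
    using v by (auto simp: sympl_dual_def Rspace_def)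
  have code: "(modR m (a * g11), modR m (a * g12 + b * g22)) \<in> qc_code m g11 g12 g22"
    if "a \<in> Rspace m" "b \<in> Rspace m" for a b
    unfolding qc_code_def using that by blast
  have shift: "monom 1 k \<in> Rspace m" if "k < m" for k
    using that by (simp add: Rspace_def degree_monom_eq)
  have zero: "0 \<in> Rspace m" using m by (simp add: Rspace_def)
  show "xm1 m dvd g22 * rev_coeffs m v1"
  proof (rule xm1_dvd_if_shifted_top_coeffs_0[OF m])
    fix k assume "k < m"
    then have "ip_s m (0, (monom 1 k * g22) mod xm1 m) (v1, v2) = 0"
      using orth code[OF zero shift] by (simp add: modR_def)
    then show "coeff ((monom 1 k * (g22 * rev_coeffs m v1)) mod xm1 m) (m - 1) = 0"
      by (simp add: ip_s_def ip_e_mod_xm1[OF m d1] mult.assoc) (simp add: ip_e_def)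
  qed
  show "xm1 m dvd g11 * rev_coeffs m v2 - g12 * rev_coeffs m v1"
  proof (rule xm1_dvd_if_shifted_top_coeffs_0[OF m])
    fix k assume "k < m"
    then have "ip_s m ((monom 1 k * g11) mod xm1 m, (monom 1 k * g12) mod xm1 m) (v1, v2) = 0"
      using orth code[OF shift zero] by (simp add: modR_def)
    then show "coeff ((monom 1 k * (g11 * rev_coeffs m v2 - g12 * rev_coeffs m v1)) mod xm1 m) (m - 1) = 0"
      by (simp add: ip_s_def ip_e_mod_xm1[OF m d1] ip_e_mod_xm1[OF m d2] mult.assoc
          right_diff_distrib poly_mod_diff_left)
  qed
qed

lemma prime_dvd_reflect_poly_or_dvd:
  fixes g v p :: "'a::field_gcd poly"
  assumes m: "m \<ge> 1" and p: "prime p" and "p dvd xm1 m"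
    and "xm1 m dvd g * rev_coeffs m v" and "degree v < m"
  shows "p dvd reflect_poly g \<or> p dvd v"
proof -
  have "reflect_poly (xm1 m) dvd reflect_poly (g * rev_coeffs m v)"
    using assms(4) by (metis dvdE dvd_triv_left reflect_poly_mult)
  then have "p dvd reflect_poly g * reflect_poly (rev_coeffs m v)"
    using assms(3) by (auto simp: reflect_poly_xm1[OF m] reflect_poly_mult intro: dvd_trans)
  then show ?thesis
    using p reflect_poly_rev_coeffs_dvd[OF m assms(5)] by (auto simp: prime_dvd_mult_iff intro: dvd_trans)
qed

lemma eq_0_if_prime_factors_of_xm1_dvd:
  fixes v :: "'a::field_gcd poly"
  assumes m: "m \<ge> 1" and "squarefree (xm1 m :: 'a poly)" and "degree v < m"
    and "\<And>p. prime p \<Longrightarrow> p dvd xm1 m \<Longrightarrow> p dvd v"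
  shows "v = 0"
proof -
  have "xm1 m dvd v" using assms(2,4) by (rule squarefree_dvdI)
  then show ?thesis using assms(3) degree_xm1[OF m] by (metis dvd_imp_mod_0 mod_poly_less)
qed

lemma reflect_poly_dvd_if_self_reciprocal: "self_reciprocal f \<Longrightarrow> reflect_poly f dvd f"
  by (auto simp: self_reciprocal_def smult_dvd_iff)

lemma qc_code_inter_sympl_dual_fst_eq_0:
  fixes g11 g12 g22 :: "'a::field_gcd poly"
  assumes m: "m \<ge> 1" and sqf: "squarefree (xm1 m :: 'a poly)"
    and gcd22: "gcd g11 g22 = gcd g22 (reflect_poly g22)"
    and sr: "self_reciprocal (g11 * g22)"
    and v: "(v1, v2) \<in> qc_code m g11 g12 g22 \<inter> sympl_dual m (qc_code m g11 g12 g22)"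
  shows "v1 = 0"
proof -
  from v obtain a where v1: "v1 = (a * g11) mod xm1 m" by (auto simp: qc_code_def modR_def)
  have deg: "degree v1 < m" using v by (auto simp: sympl_dual_def Rspace_def)
  have xm1_dvd: "xm1 m dvd g22 * rev_coeffs m v1" using v sympl_dual_qc_code_dvd(1)[OF m] by blast
  show ?thesis
  proof (rule eq_0_if_prime_factors_of_xm1_dvd[OF m sqf deg])
    fix p :: "'a poly" assume p: "prime p" and p_xm1: "p dvd xm1 m"
    show "p dvd v1"
    proof (rule ccontr)
      assume p_v1: "\<not> p dvd v1"
      then have p_g11: "\<not> p dvd g11" using p_xm1 by (auto simp: v1 dvd_mod_iff)
      have p_g22': "p dvd reflect_poly g22"
        using prime_dvd_reflect_poly_or_dvd[OF m p p_xm1 xm1_dvd deg] p_v1 by blast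
      then have "p dvd g11 * g22"
        using reflect_poly_dvd_if_self_reciprocal[OF sr]
        by (metis dvd_mult dvd_trans reflect_poly_mult)
      with p p_g11 have "p dvd g22" by (simp add: prime_dvd_mult_iff)
      with p_g22' have "p dvd gcd g11 g22" by (simp add: gcd22)
      with p_g11 show False by (meson dvd_trans gcd_dvd1)
    qed
  qed
qed

lemma qc_code_inter_sympl_dual_snd_eq_0:
  fixes g11 g12 g22 :: "'a::field_gcd poly"
  assumes m: "m \<ge> 1" and sqf: "squarefree (xm1 m :: 'a poly)"
    and g12: "g11 * g22 dvd xm1 m * g12"
    and gcd11: "gcd g11 g22 = gcd g11 (reflect_poly g11)"
    and sr: "self_reciprocal (g11 * g22)"
    and v: "(v1, v2) \<in> qc_code m g11 g12 g22 \<inter> sympl_dual m (qc_code m g11 g12 g22)"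
    and v1: "v1 = 0"
  shows "v2 = 0"
proof -
  from v obtain a b where a: "xm1 m dvd a * g11" and v2: "v2 = (a * g12 + b * g22) mod xm1 m"
    by (auto simp: v1 qc_code_def modR_def)
  have deg: "degree v2 < m" using v by (auto simp: sympl_dual_def Rspace_def)
  have "(0, v2) \<in> sympl_dual m (qc_code m g11 g12 g22)" using v by (simp add: v1)
  from sympl_dual_qc_code_dvd(2)[OF m this]
  have xm1_dvd: "xm1 m dvd g11 * rev_coeffs m v2" by (simp add: rev_coeffs_def)
  show ?thesis
  proof (rule eq_0_if_prime_factors_of_xm1_dvd[OF m sqf deg])
    fix p :: "'a poly" assume p: "prime p" and p_xm1: "p dvd xm1 m"
    show "p dvd v2"
    proof (rule ccontr)
      assume p_v2: "\<not> p dvd v2"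
      then have p_sum: "\<not> p dvd a * g12 + b * g22" using p_xm1 by (simp add: v2 dvd_mod_iff)
      have p_g11': "p dvd reflect_poly g11"
        using prime_dvd_reflect_poly_or_dvd[OF m p p_xm1 xm1_dvd deg] p_v2 by blast
      show False
      proof (cases "p dvd g22")
        case True
        with p_sum have "\<not> p dvd a" "\<not> p dvd g12" by (meson dvd_add dvd_mult dvd_mult2)+
        moreover have "p dvd a * g11" using p_xm1 a by (rule dvd_trans)
        ultimately have "p dvd g11" using p by (simp add: prime_dvd_mult_iff)
        \<comment> \<open>a prime dividing g11 and g22 divides g12, since x^m - 1 is squarefree\<close>
        with True have "p ^ 2 dvd xm1 m * g12"
          by (metis g12 dvd_trans mult_dvd_mono power2_eq_square)
        moreover have "\<not> p ^ 2 dvd xm1 m"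
          using sqf p by (metis not_prime_unit squarefreeD)
        ultimately have "p dvd g12"
          using p by (metis coprime_dvd_mult_left_iff prime_imp_coprime coprime_power_left_iff)
        with \<open>\<not> p dvd g12\<close> show False ..
      next
        case False
        have "p dvd g11 * g22"
          using p_g11' reflect_poly_dvd_if_self_reciprocal[OF sr]
          by (metis dvd_mult2 dvd_trans reflect_poly_mult)
        with p False have "p dvd g11" by (simp add: prime_dvd_mult_iff)
        with p_g11' have "p dvd gcd g11 g22" by (simp add: gcd11)
        with False show False by (meson dvd_trans gcd_dvd2)
      qed
    qed
  qed
qed

theorem corollary5p7:
  fixes g11 g12 g22 :: "'a::{field_gcd,finite} poly" and m :: nat
  assumes "m \<ge> 1"
    and "coprime (card (UNIV :: 'a set)) m"
    and "g11 dvd xm1 m"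
    and "g22 dvd xm1 m"
    and "degree g12 < degree g22"
    and "g11 * g22 dvd xm1 m * g12"
    and "gcd g11 g22 = gcd g11 (reflect_poly g11)"
    and "gcd g11 g22 = gcd g22 (reflect_poly g22)"
    and "self_reciprocal (gcd g11 g22)"
    and "self_reciprocal (g11 * g22)"
  shows "symplectic_LCD m (qc_code m g11 g12 g22)"
proof -
  let ?C = "qc_code m g11 g12 g22"
  have sqf: "squarefree (xm1 m :: 'a poly)"
    using assms(1) of_nat_neq_0_if_coprime_card[OF assms(2)] by (rule squarefree_xm1)
  have "v = (0, 0)" if "v \<in> ?C \<inter> sympl_dual m ?C" for v
  proof -
    obtain v1 v2 where v12: "v = (v1, v2)" by fastforce
    with that have v: "(v1, v2) \<in> ?C \<inter> sympl_dual m ?C" by simp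
    have v1: "v1 = 0"
      by (rule qc_code_inter_sympl_dual_fst_eq_0[OF assms(1) sqf assms(8,10) v])
    have "v2 = 0"
      by (rule qc_code_inter_sympl_dual_snd_eq_0[OF assms(1) sqf assms(6,7,10) v v1])
    with v1 v12 show ?thesis by simp
  qed
  moreover have "(0, 0) \<in> ?C"
    unfolding qc_code_def using assms(1) by (auto simp: modR_def Rspace_def intro!: exI[of _ 0])
  moreover have "(0, 0) \<in> sympl_dual m ?C"
    using assms(1) by (simp add: sympl_dual_def Rspace_def ip_s_def ip_e_def)
  ultimately show ?thesis unfolding symplectic_LCD_def by blast
qed

end
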